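(* Let $V$ be a real vector space endowed with some topology and $X$ a cone in $V$. Suppose $w\in\mathbb{R}$, $f\in P_X$, and $R$ is a locally nonsatiated total relation on $X$. Then $\mathcal{M}(R,B^w_{f,X})$ is an $X$-antichain included in $\operatorname{bd}(F^w_f)$.
   Context: A cone in $V$ is a subset $X$ with $\lambda X\subseteq X$ for all $\lambda>0$ (possibly empty, need not contain $0$). $V^*$ denotes the continuous linear functionals on $V$. $P_X=\{f\in V^*: f(x)>0\text{ for all }x\in X\setminus\{0\}\}$. $F^w_f=\{v\in V:f(v)\le w\}$ and $B^w_{f,X}=F^w_f\cap X$; $\operatorname{bd}$ denotes topological boundary. For a cone $K$, a set $A$ is a $K$-antichain iff for all distinct $x,y\in A$, $y-x\notin K\cup(-K)$. For a relation $R\subseteq X\times X$, $R(x)=\{t\in X:(t,x)\in R\}$; $R$ is total iff for all $s,t\in X$, $t\in R(s)$ or $s\in R(t)$; $R$ is locally nonsatiated iff $x\in\operatorname{cl}(\{y\in X:y\in R(x)\text{ and }x\notin R(y)\})$ for all $x\in X$ (closure in $V$). For $S\subseteq X$, $m\in S$ is $R$-maximal on $S$ iff for every $s\in S$ with $s\in R(m)$ one has $m\in R(s)$; $\mathcal{M}(R,S)$ is the set of these. *)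

theory Defs
  imports "HOL-Analysis.Analysis"
begin

text \<open>V is a real vector space carrying an arbitrary topology: the sort
  {real_vector, topological_space} imposes no compatibility between the two.\<close>

definition is_cone :: "'a::real_vector set \<Rightarrow> bool" where
  "is_cone X \<longleftrightarrow> (\<forall>c::real. c > 0 \<longrightarrow> (\<lambda>x. c *\<^sub>R x) ` X \<subseteq> X)"

definition dual_space :: "('a::{real_vector,topological_space} \<Rightarrow> real) set" where
  "dual_space = {f. linear f \<and> continuous_on UNIV f}"

definition P_set :: "'a::{real_vector,topological_space} set \<Rightarrow> ('a \<Rightarrow> real) set" where
  "P_set X = {f \<in> dual_space. \<forall>x \<in> X - {0}. f x > 0}"

definition F_set :: "real \<Rightarrow> ('a \<Rightarrow> real) \<Rightarrow> 'a set" where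
  "F_set w f = {v. f v \<le> w}"

definition B_set :: "real \<Rightarrow> ('a \<Rightarrow> real) \<Rightarrow> 'a set \<Rightarrow> 'a set" where
  "B_set w f X = F_set w f \<inter> X"

definition antichain :: "'a::real_vector set \<Rightarrow> 'a set \<Rightarrow> bool" where
  "antichain K A \<longleftrightarrow> (\<forall>x\<in>A. \<forall>y\<in>A. x \<noteq> y \<longrightarrow> y - x \<notin> K \<union> uminus ` K)"

definition rel_at :: "('a \<times> 'a) set \<Rightarrow> 'a set \<Rightarrow> 'a \<Rightarrow> 'a set" where
  "rel_at R X x = {t \<in> X. (t, x) \<in> R}"

definition total_rel :: "('a \<times> 'a) set \<Rightarrow> 'a set \<Rightarrow> bool" where
  "total_rel R X \<longleftrightarrow> (\<forall>s\<in>X. \<forall>t\<in>X. t \<in> rel_at R X s \<or> s \<in> rel_at R X t)"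

definition locally_nonsatiated :: "('a::topological_space \<times> 'a) set \<Rightarrow> 'a set \<Rightarrow> bool" where
  "locally_nonsatiated R X \<longleftrightarrow>
     (\<forall>x\<in>X. x \<in> closure {y \<in> X. y \<in> rel_at R X x \<and> x \<notin> rel_at R X y})"

definition maximals :: "('a \<times> 'a) set \<Rightarrow> 'a set \<Rightarrow> 'a set \<Rightarrow> 'a set" where
  "maximals R X S = {m \<in> S. \<forall>s\<in>S. s \<in> rel_at R X m \<longrightarrow> m \<in> rel_at R X s}"

end

theory Submission
  imports Defs
begin

text \<open>A maximal element m of R on B = F \<inter> X cannot lie in the interior of F: local nonsatiation
  yields points of X strictly preferred to m arbitrarily close to m, and near m they would still
  belong to B. Since f is continuous, f m < w would put m in that interior, so every maximal
  element lies on the hyperplane f = w. On this hyperplane differences of points are annihilated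
  by f, whereas f is strictly positive on X - {0} and strictly negative on -X - {0}.\<close>

lemma maximal_notin_interior:
  assumes "locally_nonsatiated R X"
    and "m \<in> maximals R X (T \<inter> X)"
  shows "m \<notin> interior T"
proof
  assume "m \<in> interior T"
  then obtain U where U: "open U" "m \<in> U" "U \<subseteq> T"
    by (meson interiorE)
  let ?better = "{y \<in> X. y \<in> rel_at R X m \<and> m \<notin> rel_at R X y}"
  have "m \<in> closure ?better"
    using assms by (auto simp: locally_nonsatiated_def maximals_def)
  then obtain y where "y \<in> U" "y \<in> ?better"
    using U(1,2) open_Int_closure_eq_empty by blast
  then show False
    using assms(2) U(3) by (auto simp: maximals_def)
qed

lemma strict_sublevel_subset_interior_F_set:
  assumes "continuous_on UNIV f"
  shows "{v. f v < w} \<subseteq> interior (F_set w f)"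
proof (rule interior_maximal)
  have "open (f -` {..<w})"
    using assms by (simp add: continuous_on_open_vimage)
  then show "open {v. f v < w}"
    by (simp add: vimage_def)
qed (auto simp: F_set_def)

lemma maximals_B_set_subset_frontier:
  assumes "locally_nonsatiated R X"
  shows "maximals R X (B_set w f X) \<subseteq> frontier (F_set w f)"
proof
  fix m assume m: "m \<in> maximals R X (B_set w f X)"
  then have "m \<in> F_set w f"
    by (simp add: maximals_def B_set_def)
  moreover have "m \<notin> interior (F_set w f)"
    using maximal_notin_interior[OF assms] m by (simp add: B_set_def)
  ultimately show "m \<in> frontier (F_set w f)"
    using closure_subset by (auto simp: frontier_def)
qed

lemma maximals_B_set_on_level:
  assumes "locally_nonsatiated R X" and "continuous_on UNIV f"
    and "m \<in> maximals R X (B_set w f X)"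
  shows "f m = w"
proof -
  have "f m \<le> w"
    using assms(3) by (simp add: maximals_def B_set_def F_set_def)
  moreover have "m \<notin> interior (F_set w f)"
    using maximal_notin_interior[OF assms(1)] assms(3) by (simp add: B_set_def)
  ultimately show ?thesis
    using strict_sublevel_subset_interior_F_set[OF assms(2)] by force
qed

lemma antichain_if_P_set_constant_on:
  assumes "f \<in> P_set X" and "\<And>x. x \<in> A \<Longrightarrow> f x = c"
  shows "antichain X A"
  unfolding antichain_def
proof (intro ballI impI)
  fix x y assume "x \<in> A" "y \<in> A" "x \<noteq> y"
  have lin: "linear f" and pos: "\<And>z. z \<in> X - {0} \<Longrightarrow> f z > 0"
    using assms(1) by (auto simp: P_set_def dual_space_def)
  have "f (y - x) = 0" "f (x - y) = 0"
    using assms(2) \<open>x \<in> A\<close> \<open>y \<in> A\<close> by (simp_all add: linear_diff[OF lin])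
  then have "y - x \<notin> X" "x - y \<notin> X"
    using pos \<open>x \<noteq> y\<close> by force+
  then show "y - x \<notin> X \<union> uminus ` X"
    by (metis UnE imageE minus_diff_eq minus_minus)
qed

theorem theorem12:
  fixes X :: "'a::{real_vector,topological_space} set"
    and w :: real and f :: "'a \<Rightarrow> real" and R :: "('a \<times> 'a) set"
  assumes "is_cone X"
    and "f \<in> P_set X"
    and "R \<subseteq> X \<times> X"
    and "locally_nonsatiated R X"
    and "total_rel R X"
  shows "antichain X (maximals R X (B_set w f X)) \<and>
         maximals R X (B_set w f X) \<subseteq> frontier (F_set w f)"
proof
  have "continuous_on UNIV f"
    using assms(2) by (simp add: P_set_def dual_space_def)
  then show "antichain X (maximals R X (B_set w f X))"
    using antichain_if_P_set_constant_on[OF assms(2)] maximals_B_set_on_level[OF assms(4)] by blast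
  show "maximals R X (B_set w f X) \<subseteq> frontier (F_set w f)"
    using maximals_B_set_subset_frontier[OF assms(4)] .
qed

end
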